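(* For every integer $r\ge 4$ and every positive integer $n$, $\mathrm{ex}(n,S_r,C_4)=\binom{n-1}{r-1}$.
   Context: $S_r$ denotes the star on $r$ vertices (one center joined to $r-1$ leaves), and $C_4$ the cycle on $4$ vertices. For graphs $H,G$, $\mathcal{N}(H,G)$ is the number of subgraphs of $G$ isomorphic to $H$, and $\mathrm{ex}(n,H,F)$ is the maximum of $\mathcal{N}(H,G)$ over $F$-free graphs $G$ on $n$ vertices. *)

theory Defs
  imports Main
begin

type_synonym 'a ugraph = "'a set \<times> 'a set set"

definition wf_graph :: "'a ugraph \<Rightarrow> bool" where
  "wf_graph G \<longleftrightarrow> finite (fst G) \<and> (\<forall>e\<in>snd G. e \<subseteq> fst G \<and> card e = 2)"

definition graph_iso :: "'a ugraph \<Rightarrow> 'b ugraph \<Rightarrow> bool" where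
  "graph_iso G H \<longleftrightarrow> (\<exists>f. bij_betw f (fst G) (fst H) \<and>
     (\<forall>u\<in>fst G. \<forall>v\<in>fst G. {u, v} \<in> snd G \<longleftrightarrow> {f u, f v} \<in> snd H))"

definition subgraphs :: "'a ugraph \<Rightarrow> 'a ugraph set" where
  "subgraphs G = {(V', E'). V' \<subseteq> fst G \<and> E' \<subseteq> snd G \<and> (\<forall>e\<in>E'. e \<subseteq> V')}"

definition count_sub :: "'b ugraph \<Rightarrow> 'a ugraph \<Rightarrow> nat" where
  "count_sub H G = card {S \<in> subgraphs G. graph_iso S H}"

definition star :: "nat \<Rightarrow> nat ugraph" where
  "star r = ({0..<r}, {{0, i} | i. 0 < i \<and> i < r})"

definition cycle4 :: "nat ugraph" where
  "cycle4 = ({0..<4}, {{0,1}, {1,2}, {2,3}, {3,0}})"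

text \<open>ex(n, H, F): maximum of N(H, G) over F-free graphs G on n vertices
(vertex set {0..<n}, which is no loss of generality up to isomorphism).\<close>
definition gen_ex :: "nat \<Rightarrow> 'b ugraph \<Rightarrow> 'c ugraph \<Rightarrow> nat" where
  "gen_ex n H F = Max {count_sub H G | G :: nat ugraph.
      wf_graph G \<and> fst G = {0..<n} \<and> count_sub F G = 0}"

end

theory Submission
  imports Defs
begin

text \<open>
  Counting a copy of \<open>S\<^sub>r\<close> by its centre and its set of \<open>k = r - 1\<close> leaves gives
  \<open>N(S\<^sub>r, G) \<le> \<Sum>\<^sub>v C(d(v), k)\<close>, and the star \<open>S\<^sub>n\<close>, which contains no \<open>C\<^sub>4\<close>, has exactly
  \<open>C(n - 1, k)\<close> copies of \<open>S\<^sub>r\<close>. In a \<open>C\<^sub>4\<close>-free graph two distinct vertices have at most one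
  common neighbour. Let \<open>u\<close> have maximum degree \<open>D\<close>. If \<open>D = n - 1\<close>, every other vertex has
  degree at most 2. If \<open>D = n - 2\<close>, the unique non-neighbour \<open>w\<close> of \<open>u\<close> has degree at most 1
  and every other vertex of degree at least 3 is adjacent to \<open>w\<close>, so the sum is at most
  \<open>C(D, k) + C(D, k - 1) = C(n - 1, k)\<close>. These two cases need \<open>k \<ge> 3\<close>, i.e. \<open>r \<ge> 4\<close>.
  If \<open>D \<le> n - 3\<close>, the identity \<open>C(k, 2) C(d, k) = C(d, 2) C(d - 2, k - 2)\<close> and the fact that
  a pair of vertices lies in at most one neighbourhood give
  \<open>C(k, 2) \<Sum>\<^sub>v C(d(v), k) \<le> C(n - 5, k - 2) C(n, 2) \<le> C(n - 1, 2) C(n - 3, k - 2) = C(k, 2) C(n - 1, k)\<close>.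
\<close>

section \<open>Binomial coefficient inequalities\<close>

lemma choose_Suc_le_mult: "m choose Suc i \<le> m * (m choose i)"
proof -
  have "m choose Suc i \<le> Suc i * (m choose Suc i)" by simp
  also have "\<dots> = m * ((m - 1) choose i)" by (rule binomial_absorption)
  also have "\<dots> \<le> m * (m choose i)" by (intro mult_le_mono2 binomial_right_mono) simp
  finally show ?thesis .
qed

lemma mult_choose_le_mult_choose_add_2:
  assumes "1 \<le> j"
  shows "(m + 5) * (m choose j) \<le> (m + 3) * ((m + 2) choose j)"
proof -
  obtain i where j: "j = Suc i" using assms by (cases j) auto
  have pascal: "2 * (m choose i) + (m choose Suc i) \<le> (m + 2) choose Suc i"
    by (cases i) auto
  have "(m + 5) * (m choose Suc i) = (m + 3) * (m choose Suc i) + 2 * (m choose Suc i)"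
    by (simp add: algebra_simps)
  also have "\<dots> \<le> (m + 3) * (m choose Suc i) + (m + 3) * (2 * (m choose i))"
    using le_trans[OF choose_Suc_le_mult mult_le_mono1[of m "m + 3"]] by simp
  also have "\<dots> \<le> (m + 3) * ((m + 2) choose Suc i)"
    using pascal by (simp flip: add_mult_distrib2)
  finally show ?thesis unfolding j .
qed

lemma two_mult_choose_two: "2 * (n choose 2) = n * (n - 1)"
  using binomial_absorption[of 1 n] by (simp add: numeral_2_eq_2)

lemma choose_diff_5_mult_choose_2_le:
  assumes "1 \<le> j"
  shows "((n - 5) choose j) * (n choose 2) \<le> ((n - 1) choose 2) * ((n - 3) choose j)"
proof (cases "n < 5")
  case True
  then show ?thesis using assms by (cases j) simp_all
next
  case False
  then obtain m where n: "n = m + 5" by (metis add.commute le_Suc_ex not_less)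
  have twice: "2 * (n choose 2) = (m + 5) * (m + 4)" "2 * ((n - 1) choose 2) = (m + 4) * (m + 3)"
    using two_mult_choose_two[of n] two_mult_choose_two[of "n - 1"] by (simp_all add: n add.commute)
  have "2 * (((n - 5) choose j) * (n choose 2)) = (m + 4) * ((m + 5) * (m choose j))"
    unfolding mult.left_commute[of 2] twice by (simp add: n)
  also have "\<dots> \<le> (m + 4) * ((m + 3) * ((m + 2) choose j))"
    using mult_choose_le_mult_choose_add_2[OF assms] by simp
  also have "\<dots> = 2 * (((n - 3) choose j) * ((n - 1) choose 2))"
    unfolding mult.left_commute[of 2] twice by (simp add: n)
  finally show ?thesis by (simp add: mult.commute)
qed

lemma choose_two_mult_choose:
  assumes "2 \<le> k"
  shows "(k choose 2) * (d choose k) = (d choose 2) * ((d - 2) choose (k - 2))"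
proof (cases "k \<le> d")
  case True
  then show ?thesis using choose_mult[of 2 k d] assms by (simp add: mult.commute)
next
  case False
  then show ?thesis using assms by (cases "d < 2") (auto simp: binomial_eq_0)
qed

section \<open>Degree sums in graphs without 4-cycles\<close>

locale c4_free_neighbourhoods =
  fixes V :: "'a set" and N :: "'a \<Rightarrow> 'a set"
  assumes finite_V: "finite V"
    and N_subset: "v \<in> V \<Longrightarrow> N v \<subseteq> V"
    and not_in_N: "v \<in> V \<Longrightarrow> v \<notin> N v"
    and N_sym: "v \<in> V \<Longrightarrow> w \<in> N v \<Longrightarrow> v \<in> N w"
    and card_common_N_le_1: "a \<in> V \<Longrightarrow> b \<in> V \<Longrightarrow> a \<noteq> b \<Longrightarrow> card (N a \<inter> N b) \<le> 1"
begin

lemma finite_N: "v \<in> V \<Longrightarrow> finite (N v)"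
  using N_subset finite_V finite_subset by blast

lemma card_N_le_Suc_card_Diff:
  assumes "u \<in> V" "v \<in> V" "v \<noteq> u"
  shows "card (N v) \<le> Suc (card (N v - N u))"
  using card_Int_Diff[OF finite_N[OF assms(2)], of "N u"] card_common_N_le_1[of v u] assms
  by simp

lemma sum_choose_card_N_2_le: "(\<Sum>v\<in>V. card (N v) choose 2) \<le> card V choose 2"
proof -
  let ?P = "SIGMA v:V. {T. T \<subseteq> N v \<and> card T = 2}"
  have "(\<Sum>v\<in>V. card (N v) choose 2) = (\<Sum>v\<in>V. card {T. T \<subseteq> N v \<and> card T = 2})"
    using finite_N by (intro sum.cong refl n_subsets[symmetric]) auto
  also have "\<dots> = card ?P"
    using finite_V finite_N by (subst card_SigmaI) auto
  also have "\<dots> = card (snd ` ?P)"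
  proof (intro card_image[symmetric] inj_onI)
    fix x y assume "x \<in> ?P" "y \<in> ?P" "snd x = snd y"
    then obtain a b T where ab: "x = (a, T)" "y = (b, T)" "a \<in> V" "b \<in> V"
      and T: "T \<subseteq> N a \<inter> N b" "card T = 2"
      by (cases x, cases y) auto
    have "a = b"
    proof (rule ccontr)
      assume "a \<noteq> b"
      then have "card (N a \<inter> N b) \<le> 1" using card_common_N_le_1 ab by simp
      moreover have "card T \<le> card (N a \<inter> N b)"
        using T finite_N ab by (intro card_mono) auto
      ultimately show False using T by simp
    qed
    then show "x = y" using ab by simp
  qed
  also have "\<dots> \<le> card {T. T \<subseteq> V \<and> card T = 2}"
    using finite_V N_subset by (intro card_mono) fastforce+
  also have "\<dots> = card V choose 2" using finite_V by (rule n_subsets)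
  finally show ?thesis .
qed

lemma sum_choose_card_N_le_if_degrees_le:
  assumes k: "3 \<le> k" and small: "\<And>v. v \<in> V \<Longrightarrow> card (N v) + 3 \<le> card V"
  shows "(\<Sum>v\<in>V. card (N v) choose k) \<le> (card V - 1) choose k"
proof -
  let ?n = "card V"
  have "(k choose 2) * (\<Sum>v\<in>V. card (N v) choose k)
      = (\<Sum>v\<in>V. (card (N v) choose 2) * ((card (N v) - 2) choose (k - 2)))"
    using k by (simp add: sum_distrib_left choose_two_mult_choose)
  also have "\<dots> \<le> (\<Sum>v\<in>V. (card (N v) choose 2) * ((?n - 5) choose (k - 2)))"
    using small by (intro sum_mono mult_le_mono2 binomial_right_mono) fastforce
  also have "\<dots> = ((?n - 5) choose (k - 2)) * (\<Sum>v\<in>V. card (N v) choose 2)"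
    unfolding sum_distrib_left by (simp add: mult.commute)
  also have "\<dots> \<le> ((?n - 5) choose (k - 2)) * (?n choose 2)"
    using sum_choose_card_N_2_le by simp
  also have "\<dots> \<le> ((?n - 1) choose 2) * ((?n - 3) choose (k - 2))"
    using k by (intro choose_diff_5_mult_choose_2_le) simp
  also have "\<dots> = (k choose 2) * ((?n - 1) choose k)"
    using choose_two_mult_choose[of k "?n - 1"] k by (simp add: numeral_eq_Suc)
  finally show ?thesis using k by (simp add: zero_less_binomial)
qed

lemma sum_choose_card_N_eq_0_if_dominating:
  assumes k: "3 \<le> k" and u: "u \<in> V" "N u = V - {u}"
  shows "(\<Sum>v\<in>V - {u}. card (N v) choose k) = 0"
proof (intro sum.neutral ballI)
  fix v assume v: "v \<in> V - {u}"
  have "card (N v - N u) \<le> card {u}"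
    using N_subset[of v] u v by (intro card_mono) auto
  then have "card (N v) \<le> 2" using card_N_le_Suc_card_Diff[OF u(1), of v] v by auto
  then show "card (N v) choose k = 0" using k by simp
qed

lemma card_N_le_1_if_unique_non_neighbour:
  assumes u: "u \<in> V" and w: "V - {u} - N u = {w}"
  shows "card (N w) \<le> 1"
proof -
  have w': "w \<in> V" "w \<noteq> u" "w \<notin> N u" using w by auto
  have "N w \<subseteq> N u"
  proof
    fix x assume x: "x \<in> N w"
    have "x \<in> V" "x \<noteq> w" using N_subset not_in_N w' x by auto
    moreover have "x \<noteq> u" using N_sym[OF w'(1) x] w' by auto
    ultimately show "x \<in> N u" using w by blast
  qed
  then show ?thesis using card_common_N_le_1[of w u] u w' by (simp add: Int_absorb2)
qed

lemma sum_choose_card_N_le_1_if_unique_non_neighbour: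
  assumes k: "3 \<le> k" and u: "u \<in> V" and w: "V - {u} - N u = {w}"
  shows "(\<Sum>v\<in>V - {u}. card (N v) choose k) \<le> 1"
proof -
  have summand_le: "card (N v) choose k \<le> (if v \<in> N w then 1 else 0)" if v: "v \<in> V - {u}" for v
  proof (cases "k \<le> card (N v)")
    case False
    then show ?thesis by (simp add: binomial_eq_0)
  next
    case True
    have v': "v \<in> V" "v \<noteq> u" using v by auto
    have "w \<in> N v"
    proof (rule ccontr)
      assume "w \<notin> N v"
      then have "card (N v - N u) \<le> card {u}"
        using N_subset[of v] v w by (intro card_mono) auto
      then show False using card_N_le_Suc_card_Diff[OF u v'] k True by simp
    qed
    have "card (N v - N u) \<le> card {u, w}"
      using N_subset[of v] v w by (intro card_mono) auto
    also have "\<dots> \<le> 2" by (simp add: card_insert_if)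
    finally have "card (N v) = k" using card_N_le_Suc_card_Diff[OF u v'] k True by simp
    then show ?thesis using N_sym[of v w] \<open>w \<in> N v\<close> v by simp
  qed
  have "(\<Sum>v\<in>V - {u}. card (N v) choose k) \<le> (\<Sum>v\<in>V - {u}. if v \<in> N w then 1 else 0)"
    using summand_le by (rule sum_mono)
  also have "\<dots> = card ((V - {u}) \<inter> N w)"
    using finite_V by (simp add: sum.If_cases)
  also have "\<dots> \<le> card (N w)"
    using finite_N w by (intro card_mono) auto
  also have "\<dots> \<le> 1" using card_N_le_1_if_unique_non_neighbour[OF u w] .
  finally show ?thesis .
qed

lemma sum_choose_card_N_le:
  assumes k: "3 \<le> k"
  shows "(\<Sum>v\<in>V. card (N v) choose k) \<le> (card V - 1) choose k"
proof (cases "V = {}")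
  case True
  then show ?thesis by simp
next
  case False
  define D where "D = Max ((\<lambda>v. card (N v)) ` V)"
  have "D \<in> (\<lambda>v. card (N v)) ` V" unfolding D_def using finite_V False by (intro Max_in) auto
  then obtain u where u: "u \<in> V" "card (N u) = D" by auto
  have D_max: "card (N v) \<le> D" if "v \<in> V" for v
    unfolding D_def using finite_V that by simp
  have N_u: "N u \<subseteq> V - {u}" using N_subset not_in_N u by auto
  have split: "(\<Sum>v\<in>V. card (N v) choose k) = (D choose k) + (\<Sum>v\<in>V - {u}. card (N v) choose k)"
    using sum.remove[OF finite_V u(1), of "\<lambda>v. card (N v) choose k"] u(2) by simp
  have card_V_minus_u: "card (V - {u}) = card V - 1" using finite_V u by simp
  then have "D \<le> card V - 1" using card_mono[OF _ N_u] finite_V u by simp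
  moreover have "card V \<ge> 1" using finite_V False by (simp add: Suc_leI card_gt_0_iff)
  ultimately consider "D = card V - 1" | "D + 2 = card V" | "D + 3 \<le> card V" by linarith
  then show ?thesis
  proof cases
    case 1
    then have "N u = V - {u}"
      using card_subset_eq[OF _ N_u] finite_V u card_V_minus_u by simp
    then have "(\<Sum>v\<in>V - {u}. card (N v) choose k) = 0"
      using sum_choose_card_N_eq_0_if_dominating k u by blast
    then show ?thesis using split 1 by simp
  next
    case 2
    then have "card (V - {u} - N u) = 1"
      using card_Diff_subset[OF finite_N N_u] u card_V_minus_u by simp
    then obtain w where "V - {u} - N u = {w}" by (rule card_1_singletonE)
    then have rest_le_1: "(\<Sum>v\<in>V - {u}. card (N v) choose k) \<le> 1"
      using sum_choose_card_N_le_1_if_unique_non_neighbour k u by blast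
    have "(\<Sum>v\<in>V - {u}. card (N v) choose k) \<le> D choose (k - 1)"
    proof (cases "k \<le> D")
      case True
      then show ?thesis using rest_le_1 zero_less_binomial[of "k - 1" D] by linarith
    next
      case False
      then have "card (N v) < k" if "v \<in> V" for v
        using D_max[OF that] by simp
      then have "(\<Sum>v\<in>V - {u}. card (N v) choose k) = 0"
        by (intro sum.neutral) (simp add: binomial_eq_0)
      then show ?thesis by simp
    qed
    moreover have "card V - 1 = Suc D" using 2 by simp
    moreover have "Suc D choose k = (D choose k) + (D choose (k - 1))" using k by (cases k) auto
    ultimately show ?thesis using split by simp
  next
    case 3
    then show ?thesis
      using sum_choose_card_N_le_if_degrees_le[OF k] D_max by (meson add_le_mono1 le_trans)
  qed
qed

end

section \<open>Stars and 4-cycles in graphs\<close>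

definition neighbours :: "'a ugraph \<Rightarrow> 'a \<Rightarrow> 'a set" where
  "neighbours G v = {w \<in> fst G. {v, w} \<in> snd G}"

definition star_on :: "'a \<Rightarrow> 'a set \<Rightarrow> 'a ugraph" where
  "star_on c T = (insert c T, (\<lambda>t. {c, t}) ` T)"

lemma finite_subgraphs:
  assumes "wf_graph G"
  shows "finite (subgraphs G)"
proof -
  have "finite (fst G)" "snd G \<subseteq> Pow (fst G)" using assms unfolding wf_graph_def by auto
  then have "finite (Pow (fst G) \<times> Pow (snd G))" by (simp add: finite_subset)
  moreover have "subgraphs G \<subseteq> Pow (fst G) \<times> Pow (snd G)" unfolding subgraphs_def by auto
  ultimately show ?thesis by (rule finite_subset[rotated])
qed

lemma count_sub_eq_0_iff:
  assumes "wf_graph G"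
  shows "count_sub H G = 0 \<longleftrightarrow> (\<forall>S\<in>subgraphs G. \<not> graph_iso S H)"
  using finite_subgraphs[OF assms] unfolding count_sub_def by auto

lemma wf_graph_edge_neq:
  assumes "wf_graph G" "{u, v} \<in> snd G"
  shows "u \<noteq> v"
  using assms unfolding wf_graph_def by fastforce

lemma graph_iso_image:
  assumes inj: "inj_on f V" and edges: "\<forall>e\<in>E. e \<subseteq> V"
  shows "graph_iso (V, E) (f ` V, (\<lambda>e. f ` e) ` E)"
proof -
  have "{u, v} \<in> E \<longleftrightarrow> {f u, f v} \<in> (\<lambda>e. f ` e) ` E" if "u \<in> V" "v \<in> V" for u v
  proof
    assume "{u, v} \<in> E"
    then show "{f u, f v} \<in> (\<lambda>e. f ` e) ` E" by (metis image_empty image_eqI image_insert)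
  next
    assume "{f u, f v} \<in> (\<lambda>e. f ` e) ` E"
    then obtain e where e: "e \<in> E" "f ` {u, v} = f ` e" by auto
    moreover have "{u, v} \<subseteq> V" "e \<subseteq> V" using that edges e(1) by auto
    ultimately have "{u, v} = e" using inj_on_image_eq_iff[OF inj] by blast
    then show "{u, v} \<in> E" using e by simp
  qed
  then show ?thesis unfolding graph_iso_def using inj_on_imp_bij_betw[OF inj] by auto
qed

lemma graph_iso_cycle4:
  assumes "distinct [a, x, b, y]"
  shows "graph_iso ({a, x, b, y}, {{a, x}, {x, b}, {b, y}, {y, a}}) cycle4"
proof -
  define f where "f z = (if z = a then 0 else if z = x then 1 else if z = b then 2 else 3 :: nat)" for z
  have f: "f a = 0" "f x = 1" "f b = 2" "f y = 3" using assms by (auto simp: f_def)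
  have "inj_on f {a, x, b, y}" using f by (auto simp: inj_on_def)
  then have "graph_iso ({a, x, b, y}, {{a, x}, {x, b}, {b, y}, {y, a}})
      (f ` {a, x, b, y}, (\<lambda>e. f ` e) ` {{a, x}, {x, b}, {b, y}, {y, a}})"
    by (intro graph_iso_image) auto
  also have "(f ` {a, x, b, y}, (\<lambda>e. f ` e) ` {{a, x}, {x, b}, {b, y}, {y, a}}) = cycle4"
  proof -
    have "{0..<4} = {0, 1, 2, 3 :: nat}" by auto
    then show ?thesis unfolding cycle4_def using f by simp
  qed
  finally show ?thesis .
qed

lemma card_common_neighbours_le_1:
  assumes wf: "wf_graph G" and c4: "count_sub cycle4 G = 0"
    and ab: "a \<in> fst G" "b \<in> fst G" "a \<noteq> b"
  shows "card (neighbours G a \<inter> neighbours G b) \<le> 1"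
proof (rule ccontr)
  assume "\<not> ?thesis"
  moreover have "finite (neighbours G a \<inter> neighbours G b)"
    using wf unfolding wf_graph_def neighbours_def by auto
  ultimately obtain x y where xy: "x \<in> neighbours G a \<inter> neighbours G b"
    "y \<in> neighbours G a \<inter> neighbours G b" "x \<noteq> y"
    by (auto simp: card_le_Suc0_iff_eq)
  then have edges: "{a, x} \<in> snd G" "{x, b} \<in> snd G" "{b, y} \<in> snd G" "{y, a} \<in> snd G"
    unfolding neighbours_def by (auto simp: insert_commute)
  then have "a \<noteq> x" "x \<noteq> b" "b \<noteq> y" "y \<noteq> a"
    using wf_graph_edge_neq[OF wf] by blast+
  then have "graph_iso ({a, x, b, y}, {{a, x}, {x, b}, {b, y}, {y, a}}) cycle4"
    using ab xy by (intro graph_iso_cycle4) auto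
  moreover have "({a, x, b, y}, {{a, x}, {x, b}, {b, y}, {y, a}}) \<in> subgraphs G"
    using ab xy edges unfolding subgraphs_def neighbours_def by auto
  ultimately show False using c4 count_sub_eq_0_iff[OF wf] by blast
qed

lemma c4_free_neighbourhoods_neighbours:
  assumes "wf_graph G" "count_sub cycle4 G = 0"
  shows "c4_free_neighbourhoods (fst G) (neighbours G)"
proof
  show "finite (fst G)" using assms(1) by (simp add: wf_graph_def)
  show "neighbours G v \<subseteq> fst G" if "v \<in> fst G" for v unfolding neighbours_def by auto
  show "v \<notin> neighbours G v" if "v \<in> fst G" for v
    using wf_graph_edge_neq[OF assms(1), of v v] unfolding neighbours_def by auto
  show "v \<in> neighbours G w" if "v \<in> fst G" "w \<in> neighbours G v" for v w
    using that unfolding neighbours_def by (auto simp: insert_commute)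
  show "card (neighbours G a \<inter> neighbours G b) \<le> 1"
    if "a \<in> fst G" "b \<in> fst G" "a \<noteq> b" for a b
    using card_common_neighbours_le_1[OF assms that] .
qed

lemma graph_iso_cycle4_disjoint_edges:
  assumes "graph_iso (V', E') cycle4"
  obtains e e' where "e \<in> E'" "e' \<in> E'" "e \<inter> e' = {}"
proof -
  obtain f where bij: "bij_betw f V' {0..<4}"
    and adj: "\<forall>u\<in>V'. \<forall>v\<in>V'. {u, v} \<in> E' \<longleftrightarrow> {f u, f v} \<in> {{0, 1}, {1, 2}, {2, 3}, {3, 0 :: nat}}"
    using assms unfolding graph_iso_def cycle4_def fst_conv snd_conv by blast
  define a where "a = inv_into V' f"
  have a: "a i \<in> V'" "f (a i) = i" if "i < 4" for i
    using that bij bij_betw_inv_into_right[OF bij] bij_betw_apply[OF bij_betw_inv_into[OF bij]]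
    unfolding a_def by auto
  have "{a 0, a 1} \<in> E'" "{a 2, a 3} \<in> E'" using adj a by auto
  moreover have "{a 0, a 1} \<inter> {a 2, a 3} = {}" using a[of 0] a[of 1] a[of 2] a[of 3] by auto
  ultimately show thesis using that by blast
qed

lemma graph_iso_star_on:
  assumes T: "finite T" "c \<notin> T" "card T = r - 1" and r: "1 \<le> r"
  shows "graph_iso (star_on c T) (star r)"
proof -
  obtain b where b: "bij_betw b T {1..<r}"
    using T r finite_same_card_bij[of T "{1..<r}"] by auto
  define f where "f = b(c := 0)"
  have f_T: "f ` T = {1..<r}" using b T(2) unfolding f_def bij_betw_def by auto
  have "inj_on f T" using b T(2) unfolding f_def bij_betw_def by (simp add: inj_on_def)
  moreover have "f c = 0" by (simp add: f_def)
  ultimately have "inj_on f (insert c T)" using f_T T(2) by (simp add: inj_on_insert)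
  then have "graph_iso (star_on c T) (f ` insert c T, (\<lambda>e. f ` e) ` ((\<lambda>t. {c, t}) ` T))"
    unfolding star_on_def by (intro graph_iso_image) auto
  also have "(f ` insert c T, (\<lambda>e. f ` e) ` ((\<lambda>t. {c, t}) ` T)) = star r"
  proof -
    have "f ` insert c T = {0..<r}" using f_T r \<open>f c = 0\<close> by auto
    moreover have "(\<lambda>e. f ` e) ` ((\<lambda>t. {c, t}) ` T) = (\<lambda>i. {0, i}) ` (f ` T)"
      using \<open>f c = 0\<close> by (simp add: image_image)
    ultimately show ?thesis unfolding star_def f_T by auto
  qed
  finally show ?thesis .
qed

text \<open>\<^const>\<open>graph_iso\<close> only constrains edges of the form \<open>{u, v}\<close>, hence the hypothesis on \<open>E'\<close>.\<close>
lemma star_on_if_graph_iso_star: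
  assumes iso: "graph_iso (V', E') (star r)" and E': "\<forall>e\<in>E'. e \<subseteq> V' \<and> card e = 2"
    and r: "1 \<le> r"
  obtains c T where "(V', E') = star_on c T" "c \<notin> T" "card T = r - 1"
proof -
  obtain f where bij: "bij_betw f V' {0..<r}"
    and adj: "\<forall>u\<in>V'. \<forall>v\<in>V'. {u, v} \<in> E' \<longleftrightarrow> {f u, f v} \<in> {{0, i} |i. 0 < i \<and> i < r}"
    using iso unfolding graph_iso_def star_def fst_conv snd_conv by blast
  have inj: "inj_on f V'" using bij by (rule bij_betw_imp_inj_on)
  have "0 \<in> f ` V'" using bij r unfolding bij_betw_def by simp
  then obtain c where c: "c \<in> V'" "f c = 0" by auto
  define T where "T = V' - {c}"
  have f_T: "0 < f t \<and> f t < r" if t: "t \<in> T" for t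
  proof -
    have "f t \<noteq> f c" using inj_onD[OF inj _ _ c(1)] t unfolding T_def by blast
    moreover have "f t < r" using bij_betw_apply[OF bij] t unfolding T_def by simp
    ultimately show ?thesis using c(2) by simp
  qed
  have "E' = (\<lambda>t. {c, t}) ` T"
  proof (intro equalityI subsetI)
    fix e assume e: "e \<in> E'"
    then obtain p q where pq: "e = {p, q}" "p \<noteq> q" "p \<in> V'" "q \<in> V'"
      using E' by (metis card_2_iff insert_subset)
    then have "{f p, f q} \<in> {{0, i} |i. 0 < i \<and> i < r}" using adj e by blast
    then have "f p = f c \<or> f q = f c" using c(2) by (auto simp: doubleton_eq_iff)
    then have "p = c \<or> q = c" using inj_onD[OF inj] c(1) pq(3,4) by blast
    then show "e \<in> (\<lambda>t. {c, t}) ` T" using pq unfolding T_def by (auto simp: insert_commute)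
  next
    fix e assume "e \<in> (\<lambda>t. {c, t}) ` T"
    then obtain t where t: "t \<in> T" "e = {c, t}" by blast
    have "{f c, f t} \<in> {{0, i} |i. 0 < i \<and> i < r}" using f_T[OF t(1)] c(2) by auto
    moreover have "t \<in> V'" using t(1) unfolding T_def by simp
    ultimately show "e \<in> E'" using adj c(1) t(2) by simp
  qed
  moreover have "V' = insert c T" using c(1) unfolding T_def by blast
  ultimately have "(V', E') = star_on c T" unfolding star_on_def by simp
  moreover have "card T = r - 1"
    using bij_betw_same_card[OF bij] c(1) unfolding T_def by simp
  ultimately show thesis using that unfolding T_def by blast
qed

lemma count_sub_star_le:
  assumes wf: "wf_graph G" and r: "1 \<le> r"
  shows "count_sub (star r) G \<le> (\<Sum>v\<in>fst G. card (neighbours G v) choose (r - 1))"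
proof -
  let ?P = "SIGMA c:fst G. {T. T \<subseteq> neighbours G c \<and> card T = r - 1}"
  have fin: "finite (fst G)" using wf unfolding wf_graph_def by simp
  have fin_nb: "finite (neighbours G c)" for c
    using fin unfolding neighbours_def by simp
  have "{S \<in> subgraphs G. graph_iso S (star r)} \<subseteq> (\<lambda>(c, T). star_on c T) ` ?P"
  proof
    fix S assume S: "S \<in> {S \<in> subgraphs G. graph_iso S (star r)}"
    then obtain V' E' where S_eq: "S = (V', E')" and sub: "(V', E') \<in> subgraphs G"
      and iso: "graph_iso (V', E') (star r)" by (cases S) auto
    have "\<forall>e\<in>E'. e \<subseteq> V' \<and> card e = 2"
      using sub wf unfolding subgraphs_def wf_graph_def by auto
    then obtain c T where cT: "(V', E') = star_on c T" "card T = r - 1"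
      using star_on_if_graph_iso_star[OF iso _ r] by metis
    then have "c \<in> fst G" "T \<subseteq> neighbours G c"
      using sub unfolding subgraphs_def star_on_def neighbours_def by auto
    then show "S \<in> (\<lambda>(c, T). star_on c T) ` ?P" using S_eq cT by force
  qed
  then have "count_sub (star r) G \<le> card ((\<lambda>(c, T). star_on c T) ` ?P)"
    unfolding count_sub_def using fin fin_nb by (intro card_mono finite_imageI) auto
  also have "\<dots> \<le> card ?P" by (rule card_image_le) (use fin fin_nb in auto)
  also have "\<dots> = (\<Sum>c\<in>fst G. card {T. T \<subseteq> neighbours G c \<and> card T = r - 1})"
    using fin fin_nb by (subst card_SigmaI) auto
  also have "\<dots> = (\<Sum>v\<in>fst G. card (neighbours G v) choose (r - 1))"
    using fin_nb by (simp add: n_subsets)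
  finally show ?thesis .
qed

lemma wf_graph_star_on: "finite T \<Longrightarrow> c \<notin> T \<Longrightarrow> wf_graph (star_on c T)"
  unfolding wf_graph_def star_on_def by (auto simp: card_insert_if)

lemma count_sub_star_star_on_ge:
  assumes T: "finite T" "c \<notin> T" and r: "1 \<le> r"
  shows "card T choose (r - 1) \<le> count_sub (star r) (star_on c T)"
proof -
  let ?Q = "{T'. T' \<subseteq> T \<and> card T' = r - 1}"
  have "inj_on (star_on c) ?Q"
  proof (rule inj_onI)
    fix T1 T2 assume "T1 \<in> ?Q" "T2 \<in> ?Q" "star_on c T1 = star_on c T2"
    then have "insert c T1 - {c} = insert c T2 - {c}" "c \<notin> T1" "c \<notin> T2"
      using T(2) unfolding star_on_def by auto
    then show "T1 = T2" by simp
  qed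
  then have "card ?Q = card (star_on c ` ?Q)" by (simp add: card_image)
  also have "\<dots> \<le> count_sub (star r) (star_on c T)"
    unfolding count_sub_def
  proof (intro card_mono)
    show "finite {S \<in> subgraphs (star_on c T). graph_iso S (star r)}"
      using finite_subgraphs[OF wf_graph_star_on[OF T]] by simp
    show "star_on c ` ?Q \<subseteq> {S \<in> subgraphs (star_on c T). graph_iso S (star r)}"
    proof
      fix S assume "S \<in> star_on c ` ?Q"
      then obtain T' where T': "T' \<subseteq> T" "card T' = r - 1" "S = star_on c T'" by blast
      have "finite T'" "c \<notin> T'" using T T'(1) finite_subset by auto
      then have "graph_iso S (star r)" using graph_iso_star_on T' r by simp
      moreover have "S \<in> subgraphs (star_on c T)"
        using T'(1,3) unfolding subgraphs_def star_on_def by auto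
      ultimately show "S \<in> {S \<in> subgraphs (star_on c T). graph_iso S (star r)}" by simp
    qed
  qed
  finally show ?thesis using n_subsets[OF T(1)] by simp
qed

lemma count_sub_cycle4_star_on: "count_sub cycle4 (star_on c T) = 0"
proof -
  have "\<not> graph_iso S cycle4" if "S \<in> subgraphs (star_on c T)" for S
  proof
    assume iso: "graph_iso S cycle4"
    obtain V' E' where S: "S = (V', E')" by (cases S)
    have "c \<in> e" if "e \<in> E'" for e
      using that \<open>S \<in> subgraphs (star_on c T)\<close> unfolding S subgraphs_def star_on_def by auto
    then show False using graph_iso_cycle4_disjoint_edges[OF iso[unfolded S]] by blast
  qed
  then have "{S \<in> subgraphs (star_on c T). graph_iso S cycle4} = {}" by blast
  then show ?thesis unfolding count_sub_def by (simp only: card.empty)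
qed

lemma star_eq_star_on: "1 \<le> n \<Longrightarrow> star n = star_on 0 {1..<n}"
  unfolding star_def star_on_def by auto

lemma gen_ex_eqI:
  fixes G\<^sub>0 :: "nat ugraph"
  assumes upper: "\<And>G :: nat ugraph. wf_graph G \<Longrightarrow> fst G = {0..<n} \<Longrightarrow> count_sub F G = 0 \<Longrightarrow>
      count_sub H G \<le> m"
    and G\<^sub>0: "wf_graph G\<^sub>0" "fst G\<^sub>0 = {0..<n}" "count_sub F G\<^sub>0 = 0" "m \<le> count_sub H G\<^sub>0"
  shows "gen_ex n H F = m"
proof -
  let ?M = "{count_sub H G | G :: nat ugraph. wf_graph G \<and> fst G = {0..<n} \<and> count_sub F G = 0}"
  have "?M \<subseteq> {..m}" using upper by auto
  moreover have "m \<in> ?M" using G\<^sub>0 upper[OF G\<^sub>0(1-3)] le_antisym by blast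
  ultimately show ?thesis unfolding gen_ex_def by (intro Max_eqI) (auto dest: finite_subset)
qed

theorem proposition3p2:
  fixes n r :: nat
  assumes "r \<ge> 4" and "n \<ge> 1"
  shows "gen_ex n (star r) cycle4 = (n - 1) choose (r - 1)"
proof (rule gen_ex_eqI[where G\<^sub>0 = "star n"])
  fix G :: "nat ugraph"
  assume G: "wf_graph G" "fst G = {0..<n}" "count_sub cycle4 G = 0"
  then interpret c4_free_neighbourhoods "fst G" "neighbours G"
    by (intro c4_free_neighbourhoods_neighbours)
  have "count_sub (star r) G \<le> (\<Sum>v\<in>fst G. card (neighbours G v) choose (r - 1))"
    using G(1) assms(1) by (intro count_sub_star_le) auto
  also have "\<dots> \<le> (card (fst G) - 1) choose (r - 1)"
    using assms(1) by (intro sum_choose_card_N_le) simp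
  finally show "count_sub (star r) G \<le> (n - 1) choose (r - 1)" using G(2) by simp
next
  have star_n: "star n = star_on 0 {1..<n}" using assms(2) by (rule star_eq_star_on)
  show "wf_graph (star n)" "count_sub cycle4 (star n) = 0"
    unfolding star_n by (simp_all add: wf_graph_star_on count_sub_cycle4_star_on)
  show "fst (star n) = {0..<n}" by (simp add: star_def)
  show "(n - 1) choose (r - 1) \<le> count_sub (star r) (star n)"
    using count_sub_star_star_on_ge[of "{1..<n}" 0 r] assms unfolding star_n by simp
qed

end
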